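(* Let $\alpha(s)=(x(s),0,y(s),0)$, $s\in I$, be a smooth unit-speed curve in $\mathbb{E}^4$ ($x'^2+y'^2=1$) with $x^2+y^2>0$ on the open interval $I$, and let $M$ be the rotation surface $$X(s,t)=\big(x(s)\cos t,\ x(s)\sin t,\ y(s)\cos t,\ y(s)\sin t\big).$$ Assume $M$ is flat (its Gaussian curvature vanishes identically). Then $M$ has pointwise 1-type Gauss map if and only if either $M$ is totally geodesic (an open part of a plane), or $M$ is parametrized by $$X(s,t)=\big(\lambda\cos(b_0s+d)\cos t,\ \lambda\cos(b_0s+d)\sin t,\ \lambda\sin(b_0s+d)\cos t,\ \lambda\sin(b_0s+d)\sin t\big),\qquad b_0^2\lambda^2=1,$$ for some real constants $b_0,\lambda,d$.
   Context: Gauss map: with the orthonormal tangent frame $e_1=\frac{1}{\sqrt{x^2+y^2}}\partial_t$, $e_2=\partial_s$, the Gauss map is $G=e_1\wedge e_2: M\to \Lambda^2\mathbb{E}^4\cong\mathbb{E}^6$ (with the standard inner product $\langle u_1\wedge u_2,v_1\wedge v_2\rangle=\det(\langle u_i,v_j\rangle)$). The Laplacian of a (vector-valued) function $F$ on $M$ is $\Delta F=-\sum_{i=1}^2\big(\tilde\nabla_{e_i}\tilde\nabla_{e_i}F-\tilde\nabla_{\nabla_{e_i}e_i}F\big)$, where $\tilde\nabla$ is the Euclidean connection and $\nabla$ the induced (Levi-Civita) connection of $M$. $M$ has pointwise 1-type Gauss map if $\Delta G=f(G+C)$ for some smooth function $f$ on $M$ and some constant vector $C\in\Lambda^2\mathbb{E}^4$.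 *)

theory Defs
  imports "HOL-Analysis.Analysis"
begin

definition smooth_on1 :: "real set \<Rightarrow> (real \<Rightarrow> real) \<Rightarrow> bool" where
  "smooth_on1 I g \<longleftrightarrow> (\<forall>n. \<forall>s\<in>I. ((deriv ^^ n) g) differentiable (at s))"

definition ps :: "(real \<Rightarrow> real \<Rightarrow> 'a::real_normed_vector) \<Rightarrow> real \<Rightarrow> real \<Rightarrow> 'a" where
  "ps F s t = vector_derivative (\<lambda>u. F u t) (at s)"

definition pt :: "(real \<Rightarrow> real \<Rightarrow> 'a::real_normed_vector) \<Rightarrow> real \<Rightarrow> real \<Rightarrow> 'a" where
  "pt F s t = vector_derivative (\<lambda>u. F s u) (at t)"

definition pd :: "bool \<Rightarrow> (real \<Rightarrow> real \<Rightarrow> real) \<Rightarrow> real \<Rightarrow> real \<Rightarrow> real" where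
  "pd b F = (if b then ps F else pt F)"

definition smooth_on2 :: "(real \<times> real) set \<Rightarrow> (real \<Rightarrow> real \<Rightarrow> real) \<Rightarrow> bool" where
  "smooth_on2 U g \<longleftrightarrow>
     (\<forall>ds::bool list. let h = foldr pd ds g in
        continuous_on U (\<lambda>(s,t). h s t) \<and>
        (\<forall>(s,t)\<in>U. (\<lambda>u. h u t) differentiable (at s) \<and> (\<lambda>u. h s u) differentiable (at t)))"

definition rot_surface :: "(real \<Rightarrow> real) \<Rightarrow> (real \<Rightarrow> real) \<Rightarrow> real \<Rightarrow> real \<Rightarrow> real^4" where
  "rot_surface x y s t = vector [x s * cos t, x s * sin t, y s * cos t, y s * sin t]"

definition frameD :: "(real \<Rightarrow> real) \<Rightarrow> (real \<Rightarrow> real) \<Rightarrow> nat \<Rightarrow>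
    (real \<Rightarrow> real \<Rightarrow> 'a::real_normed_vector) \<Rightarrow> real \<Rightarrow> real \<Rightarrow> 'a" where
  "frameD x y i F s t =
     (if i = 1 then (1 / sqrt ((x s)\<^sup>2 + (y s)\<^sup>2)) *\<^sub>R pt F s t else ps F s t)"

definition frameE :: "(real \<Rightarrow> real) \<Rightarrow> (real \<Rightarrow> real) \<Rightarrow> nat \<Rightarrow> real \<Rightarrow> real \<Rightarrow> real^4" where
  "frameE x y i = frameD x y i (rot_surface x y)"

text \<open>Laplacian
  Delta F = - sum_i (e_i e_i F - (nabla_{e_i} e_i) F), where nabla_{e_i} e_i is the
  tangential part of the Euclidean derivative of e_i along e_i, written in the frame.\<close>
definition laplacian :: "(real \<Rightarrow> real) \<Rightarrow> (real \<Rightarrow> real) \<Rightarrow>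
    (real \<Rightarrow> real \<Rightarrow> 'a::real_normed_vector) \<Rightarrow> real \<Rightarrow> real \<Rightarrow> 'a" where
  "laplacian x y F s t =
     - (\<Sum>i\<in>{1,2::nat}. frameD x y i (frameD x y i F) s t
          - (\<Sum>j\<in>{1,2::nat}. (frameD x y i (frameE x y i) s t \<bullet> frameE x y j s t)
                                 *\<^sub>R frameD x y j F s t))"

definition sff :: "(real \<Rightarrow> real) \<Rightarrow> (real \<Rightarrow> real) \<Rightarrow> nat \<Rightarrow> nat \<Rightarrow> real \<Rightarrow> real \<Rightarrow> real^4" where
  "sff x y i j s t =
     frameD x y i (frameE x y j) s t
     - (\<Sum>k\<in>{1,2::nat}. (frameD x y i (frameE x y j) s t \<bullet> frameE x y k s t) *\<^sub>R frameE x y k s t)"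

text \<open>Gaussian curvature via the Gauss equation K = <h(e1,e1),h(e2,e2)> - |h(e1,e2)|^2.\<close>
definition gauss_curvature :: "(real \<Rightarrow> real) \<Rightarrow> (real \<Rightarrow> real) \<Rightarrow> real \<Rightarrow> real \<Rightarrow> real" where
  "gauss_curvature x y s t =
     sff x y 1 1 s t \<bullet> sff x y 2 2 s t - sff x y 1 2 s t \<bullet> sff x y 1 2 s t"

definition totally_geodesic :: "(real \<Rightarrow> real) \<Rightarrow> (real \<Rightarrow> real) \<Rightarrow> real set \<Rightarrow> bool" where
  "totally_geodesic x y I \<longleftrightarrow>
     (\<forall>s\<in>I. \<forall>t. \<forall>i\<in>{1,2::nat}. \<forall>j\<in>{1,2::nat}. sff x y i j s t = 0)"

text \<open>Wedge product u \<and> v in Lambda^2 E^4 = E^6 (Pluecker coordinates, basis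
  e12,e13,e14,e23,e24,e34; the standard inner product on E^6 is the det-inner product).\<close>
definition wedge4 :: "real^4 \<Rightarrow> real^4 \<Rightarrow> real^6" where
  "wedge4 u v = vector
     [u$1 * v$2 - u$2 * v$1, u$1 * v$3 - u$3 * v$1, u$1 * v$4 - u$4 * v$1,
      u$2 * v$3 - u$3 * v$2, u$2 * v$4 - u$4 * v$2, u$3 * v$4 - u$4 * v$3]"

definition gauss_map :: "(real \<Rightarrow> real) \<Rightarrow> (real \<Rightarrow> real) \<Rightarrow> real \<Rightarrow> real \<Rightarrow> real^6" where
  "gauss_map x y s t = wedge4 (frameE x y 1 s t) (frameE x y 2 s t)"

definition pointwise_1type :: "(real \<Rightarrow> real) \<Rightarrow> (real \<Rightarrow> real) \<Rightarrow> real set \<Rightarrow> bool" where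
  "pointwise_1type x y I \<longleftrightarrow>
     (\<exists>(f :: real \<Rightarrow> real \<Rightarrow> real) (C :: real^6).
        smooth_on2 (I \<times> UNIV) f \<and>
        (\<forall>s\<in>I. \<forall>t. laplacian x y (gauss_map x y) s t = f s t *\<^sub>R (gauss_map x y s t + C)))"

end

theory Submission
  imports Defs
begin

text \<open>Write \<open>z = x + i y\<close> and \<open>r = |z|\<close>. Flatness forces \<open>r'\<close> and \<open>r \<theta>'\<close> to be constants
  \<open>a\<close> and \<open>b\<close> with \<open>a\<^sup>2 + b\<^sup>2 = 1\<close>, the profile curvature being \<open>b / r\<close>. The Gauss map is then
  an explicit vector in \<open>a\<close>, \<open>b\<close>, \<open>sin 2t\<close>, \<open>cos 2t\<close> and the unit complex number \<open>z z' / r\<close>,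
  which turns with speed \<open>2 b / r\<close>, and so is its Laplacian. Comparing \<open>\<Delta>G = f (G + C)\<close> at
  \<open>t = 0\<close> and \<open>t = \<pi>/4\<close> shows that \<open>z z' / r\<close> would be constant if \<open>a b \<noteq> 0\<close>. If \<open>b = 0\<close>
  the surface is totally geodesic and \<open>\<Delta>G = 0\<close>; if \<open>a = 0\<close> the profile is a circle of some
  radius \<open>r\<^sub>0\<close> and \<open>\<Delta>G = (4 / r\<^sub>0\<^sup>2) G\<close>.\<close>

lemma exhaust_6:
  fixes i :: 6
  shows "i = 1 \<or> i = 2 \<or> i = 3 \<or> i = 4 \<or> i = 5 \<or> i = 6"
proof (induct i)
  case (of_int z)
  then have "z = 0 \<or> z = 1 \<or> z = 2 \<or> z = 3 \<or> z = 4 \<or> z = 5" by fastforce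
  then show ?case by auto
qed

lemma forall_6: "(\<forall>i::6. P i) \<longleftrightarrow> P 1 \<and> P 2 \<and> P 3 \<and> P 4 \<and> P 5 \<and> P 6"
  by (metis exhaust_6)

lemma vector_4 [simp]:
  "(vector [a, b, c, d] :: ('a::zero)^4) $ 1 = a"
  "(vector [a, b, c, d] :: ('a::zero)^4) $ 2 = b"
  "(vector [a, b, c, d] :: ('a::zero)^4) $ 3 = c"
  "(vector [a, b, c, d] :: ('a::zero)^4) $ 4 = d"
  unfolding vector_def by simp_all

lemma vector_6 [simp]:
  "(vector [a, b, c, d, e, f] :: ('a::zero)^6) $ 1 = a"
  "(vector [a, b, c, d, e, f] :: ('a::zero)^6) $ 2 = b"
  "(vector [a, b, c, d, e, f] :: ('a::zero)^6) $ 3 = c"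
  "(vector [a, b, c, d, e, f] :: ('a::zero)^6) $ 4 = d"
  "(vector [a, b, c, d, e, f] :: ('a::zero)^6) $ 5 = e"
  "(vector [a, b, c, d, e, f] :: ('a::zero)^6) $ 6 = f"
  unfolding vector_def by simp_all

lemma vector4_eq_iff:
  "(vector [a1, a2, a3, a4] :: real^4) = vector [b1, b2, b3, b4] \<longleftrightarrow>
     a1 = b1 \<and> a2 = b2 \<and> a3 = b3 \<and> a4 = b4"
  by (auto simp: vec_eq_iff forall_4)

lemma vector6_eq_iff:
  "(vector [a1, a2, a3, a4, a5, a6] :: real^6) = vector [b1, b2, b3, b4, b5, b6] \<longleftrightarrow>
     a1 = b1 \<and> a2 = b2 \<and> a3 = b3 \<and> a4 = b4 \<and> a5 = b5 \<and> a6 = b6"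
  by (auto simp: vec_eq_iff forall_6)

lemma vector4_arith:
  "(vector [a1, a2, a3, a4] :: real^4) + vector [b1, b2, b3, b4] = vector [a1 + b1, a2 + b2, a3 + b3, a4 + b4]"
  "(vector [a1, a2, a3, a4] :: real^4) - vector [b1, b2, b3, b4] = vector [a1 - b1, a2 - b2, a3 - b3, a4 - b4]"
  "k *\<^sub>R (vector [a1, a2, a3, a4] :: real^4) = vector [k * a1, k * a2, k * a3, k * a4]"
  "- (vector [a1, a2, a3, a4] :: real^4) = vector [- a1, - a2, - a3, - a4]"
  "(0::real^4) = vector [0, 0, 0, 0]"
  "(vector [a1, a2, a3, a4] :: real^4) \<bullet> vector [b1, b2, b3, b4] = a1 * b1 + a2 * b2 + a3 * b3 + a4 * b4"
  by (auto simp: vec_eq_iff forall_4 inner_vec_def sum_4)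

lemma vector6_arith:
  "(vector [a1, a2, a3, a4, a5, a6] :: real^6) + vector [b1, b2, b3, b4, b5, b6] =
     vector [a1 + b1, a2 + b2, a3 + b3, a4 + b4, a5 + b5, a6 + b6]"
  "(vector [a1, a2, a3, a4, a5, a6] :: real^6) - vector [b1, b2, b3, b4, b5, b6] =
     vector [a1 - b1, a2 - b2, a3 - b3, a4 - b4, a5 - b5, a6 - b6]"
  "k *\<^sub>R (vector [a1, a2, a3, a4, a5, a6] :: real^6) = vector [k * a1, k * a2, k * a3, k * a4, k * a5, k * a6]"
  "- (vector [a1, a2, a3, a4, a5, a6] :: real^6) = vector [- a1, - a2, - a3, - a4, - a5, - a6]"
  "(0::real^6) = vector [0, 0, 0, 0, 0, 0]"
  by (auto simp: vec_eq_iff forall_6)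

lemma has_vector_derivative_scaleR_const:
  "(f has_real_derivative d) F \<Longrightarrow> ((\<lambda>u. f u *\<^sub>R (c::'a::real_normed_vector)) has_vector_derivative d *\<^sub>R c) F"
  unfolding has_real_derivative_iff_has_vector_derivative has_vector_derivative_def
  by (drule has_derivative_scaleR_left[where x=c]) (simp add: scaleR_scaleR mult.commute)

lemma has_vector_derivative_vector4:
  assumes "(f1 has_real_derivative d1) F" "(f2 has_real_derivative d2) F"
    and "(f3 has_real_derivative d3) F" "(f4 has_real_derivative d4) F"
  shows "((\<lambda>u. vector [f1 u, f2 u, f3 u, f4 u] :: real^4) has_vector_derivative vector [d1, d2, d3, d4]) F"
proof -
  have "\<And>a b c d. (vector [a, b, c, d] :: real^4) =
      a *\<^sub>R axis 1 1 + b *\<^sub>R axis 2 1 + c *\<^sub>R axis 3 1 + d *\<^sub>R axis 4 1"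
    by (auto simp: vec_eq_iff forall_4 axis_def)
  then show ?thesis
    by (simp only:) (intro has_vector_derivative_add has_vector_derivative_scaleR_const assms)
qed

lemma has_vector_derivative_vector6:
  assumes "(f1 has_real_derivative d1) F" "(f2 has_real_derivative d2) F"
    and "(f3 has_real_derivative d3) F" "(f4 has_real_derivative d4) F"
    and "(f5 has_real_derivative d5) F" "(f6 has_real_derivative d6) F"
  shows "((\<lambda>u. vector [f1 u, f2 u, f3 u, f4 u, f5 u, f6 u] :: real^6) has_vector_derivative
           vector [d1, d2, d3, d4, d5, d6]) F"
proof -
  have "\<And>a b c d e f. (vector [a, b, c, d, e, f] :: real^6) =
      a *\<^sub>R axis 1 1 + b *\<^sub>R axis 2 1 + c *\<^sub>R axis 3 1 + d *\<^sub>R axis 4 1 + e *\<^sub>R axis 5 1 + f *\<^sub>R axis 6 1"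
    by (auto simp: vec_eq_iff forall_6 axis_def)
  then show ?thesis
    by (simp only:) (intro has_vector_derivative_add has_vector_derivative_scaleR_const assms)
qed

lemma pt_eqI:
  assumes "\<And>v. F s v = h v" and "(h has_vector_derivative D) (at t)"
  shows "pt F s t = D"
  using assms by (simp add: pt_def vector_derivative_at)

lemma ps_eqI:
  assumes "open I" "s \<in> I" and "\<And>u. u \<in> I \<Longrightarrow> F u t = h u" and "(h has_vector_derivative D) (at s)"
  shows "ps F s t = D"
proof -
  have "((\<lambda>u. F u t) has_vector_derivative D) (at s)"
    using has_vector_derivative_transform_within_open[OF assms(4,1,2)] assms(3) by auto
  then show ?thesis by (simp add: ps_def vector_derivative_at)
qed

lemma has_real_derivative_zero_if_locally_const:
  assumes "open S" "s \<in> S" and "\<And>u. u \<in> S \<Longrightarrow> f u = c" and "(f has_real_derivative D) (at s)"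
  shows "D = 0"
proof -
  have "((\<lambda>u. c) has_real_derivative D) (at s)"
    using has_field_derivative_transform_within_open[OF assms(4,1,2)] assms(3) by auto
  then show ?thesis using DERIV_const DERIV_unique by blast
qed

lemma has_real_derivative_zero_imp_const_on_interval:
  assumes "is_interval (I::real set)" "open I" and "\<And>s. s \<in> I \<Longrightarrow> (f has_real_derivative 0) (at s)"
  shows "\<exists>c. \<forall>s\<in>I. f s = c"
  using has_field_derivative_zero_constant[OF is_interval_convex[OF assms(1)]] assms(3)
    has_field_derivative_at_within by blast

lemma foldr_pd_const: "foldr pd ds (\<lambda>s t. k) = (\<lambda>s t. if ds = [] then k else 0)"
  by (induction ds) (auto simp: pd_def ps_def pt_def fun_eq_iff)

lemma smooth_on2_const: "smooth_on2 U (\<lambda>s t. k)"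
  unfolding smooth_on2_def Let_def foldr_pd_const by auto

lemma smooth_on1_DERIV:
  assumes "smooth_on1 I f" "s \<in> I"
  shows "((deriv ^^ n) f has_real_derivative (deriv ^^ Suc n) f s) (at s)"
  using assms unfolding smooth_on1_def by (simp add: DERIV_deriv_iff_real_differentiable)

lemma rotation_ode_solution:
  fixes u v :: "real \<Rightarrow> real"
  assumes "is_interval I" "open I" "s0 \<in> I" "R > 0" "(u s0)\<^sup>2 + (v s0)\<^sup>2 = R\<^sup>2"
    and du: "\<And>s. s \<in> I \<Longrightarrow> (u has_real_derivative - w * v s) (at s)"
    and dv: "\<And>s. s \<in> I \<Longrightarrow> (v has_real_derivative w * u s) (at s)"
  shows "\<exists>d. \<forall>s\<in>I. u s = R * cos (w * s + d) \<and> v s = R * sin (w * s + d)"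
proof -
  have "(u s0 / R)\<^sup>2 + (v s0 / R)\<^sup>2 = 1"
    using assms(4,5) by (simp add: power_divide add_divide_distrib[symmetric])
  then obtain phi where phi: "u s0 / R = cos phi" "v s0 / R = sin phi"
    by (rule sincos_total_2pi)
  define d where "d = phi - w * s0"
  define g where "g s = (u s - R * cos (w * s + d))\<^sup>2 + (v s - R * sin (w * s + d))\<^sup>2" for s
  have "(g has_real_derivative 0) (at s)" if s: "s \<in> I" for s
  proof -
    have "(g has_real_derivative
        2 * (u s - R * cos (w * s + d)) * (- w * v s - R * (- sin (w * s + d) * w)) +
        2 * (v s - R * sin (w * s + d)) * (w * u s - R * (cos (w * s + d) * w))) (at s)"
      unfolding g_def[abs_def] by (auto intro!: derivative_eq_intros du dv s simp: algebra_simps)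
    moreover have "2 * (u s - R * cos (w * s + d)) * (- w * v s - R * (- sin (w * s + d) * w)) +
        2 * (v s - R * sin (w * s + d)) * (w * u s - R * (cos (w * s + d) * w)) = 0"
      by algebra
    ultimately show ?thesis by simp
  qed
  then obtain c where c: "\<And>s. s \<in> I \<Longrightarrow> g s = c"
    using has_real_derivative_zero_imp_const_on_interval[OF assms(1,2)] by blast
  have "g s0 = 0"
    using phi assms(4) by (simp add: g_def d_def field_simps)
  then have "g s = 0" if "s \<in> I" for s
    using c that assms(3) by metis
  then show ?thesis
    by (auto simp: g_def sum_power2_eq_zero_iff)
qed

locale profile_curve =
  fixes x y :: "real \<Rightarrow> real" and I :: "real set"
  assumes open_I: "open I" and interval_I: "is_interval I" and nonempty_I: "I \<noteq> {}"
    and smooth_x: "smooth_on1 I x" and smooth_y: "smooth_on1 I y"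
    and deriv_unit_speed: "\<forall>s\<in>I. (deriv x s)\<^sup>2 + (deriv y s)\<^sup>2 = 1"
    and off_axis: "\<forall>s\<in>I. (x s)\<^sup>2 + (y s)\<^sup>2 > 0"
begin

definition "x' = deriv x"
definition "x'' = deriv x'"
definition "y' = deriv y"
definition "y'' = deriv y'"

lemma DERIV_x: "s \<in> I \<Longrightarrow> (x has_real_derivative x' s) (at s)"
  and DERIV_x': "s \<in> I \<Longrightarrow> (x' has_real_derivative x'' s) (at s)"
  and DERIV_y: "s \<in> I \<Longrightarrow> (y has_real_derivative y' s) (at s)"
  and DERIV_y': "s \<in> I \<Longrightarrow> (y' has_real_derivative y'' s) (at s)"
  using smooth_on1_DERIV[OF smooth_x, of _ 0] smooth_on1_DERIV[OF smooth_x, of _ 1]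
    smooth_on1_DERIV[OF smooth_y, of _ 0] smooth_on1_DERIV[OF smooth_y, of _ 1]
  by (simp_all add: x'_def x''_def y'_def y''_def)

lemma unit_speed: "s \<in> I \<Longrightarrow> (x' s)\<^sup>2 + (y' s)\<^sup>2 = 1"
  using deriv_unit_speed by (simp add: x'_def y'_def)

lemma velocity_orthogonal_acceleration: assumes "s \<in> I" shows "x' s * x'' s + y' s * y'' s = 0"
proof -
  have "((\<lambda>u. (x' u)\<^sup>2 + (y' u)\<^sup>2) has_real_derivative 2 * (x' s * x'' s + y' s * y'' s)) (at s)"
    using assms by (auto intro!: derivative_eq_intros DERIV_x' DERIV_y' simp: algebra_simps)
  from has_real_derivative_zero_if_locally_const[OF open_I assms unit_speed this]
  show ?thesis by simp
qed

definition "rho s = (x s)\<^sup>2 + (y s)\<^sup>2"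
definition "r s = sqrt (rho s)"

text \<open>For \<open>z = x + i y\<close> one has \<open>conj z * z' = radial_part + i angular_part\<close>, so
  \<open>radial_part = r r'\<close> and \<open>angular_part = rho \<theta>'\<close> in polar coordinates.\<close>
definition "radial_part s = x s * x' s + y s * y' s"
definition "angular_part s = x s * y' s - y s * x' s"

lemma rho_pos: "s \<in> I \<Longrightarrow> rho s > 0"
  using off_axis by (simp add: rho_def)

lemma r_pos: "s \<in> I \<Longrightarrow> r s > 0"
  using rho_pos by (simp add: r_def)

lemma r_mult_r: "s \<in> I \<Longrightarrow> r s * r s = rho s"
  using rho_pos[of s] by (simp add: r_def)

lemma rho_eq_radial_angular: "s \<in> I \<Longrightarrow> rho s = (radial_part s)\<^sup>2 + (angular_part s)\<^sup>2"
  using unit_speed[of s] unfolding rho_def radial_part_def angular_part_def by algebra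

lemma DERIV_r: assumes "s \<in> I" shows "(r has_real_derivative radial_part s / r s) (at s)"
proof -
  have "r = (\<lambda>u. sqrt ((x u)\<^sup>2 + (y u)\<^sup>2))"
    by (simp add: fun_eq_iff r_def rho_def)
  then show ?thesis
    using assms rho_pos[OF assms]
    by (auto intro!: derivative_eq_intros DERIV_x DERIV_y
        simp: rho_def r_def radial_part_def divide_simps)
qed

definition "curvature s = x' s * y'' s - y' s * x'' s"

lemma acceleration_eq:
  assumes "s \<in> I"
  shows "x'' s = - curvature s * y' s" "y'' s = curvature s * x' s"
  using unit_speed[OF assms] velocity_orthogonal_acceleration[OF assms]
  unfolding curvature_def by algebra+

lemma DERIV_radial_part:
  assumes "s \<in> I"
  shows "(radial_part has_real_derivative 1 - curvature s * angular_part s) (at s)"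
proof -
  have "(radial_part has_real_derivative
      ((x' s)\<^sup>2 + (y' s)\<^sup>2) + (x s * x'' s + y s * y'' s)) (at s)"
    unfolding radial_part_def[abs_def] using assms
    by (auto intro!: derivative_eq_intros DERIV_x DERIV_y DERIV_x' DERIV_y'
        simp: power2_eq_square algebra_simps)
  then show ?thesis
    by (simp add: unit_speed[OF assms] acceleration_eq[OF assms] angular_part_def algebra_simps)
qed

lemma DERIV_angular_part:
  assumes "s \<in> I"
  shows "(angular_part has_real_derivative curvature s * radial_part s) (at s)"
proof -
  have "(angular_part has_real_derivative x s * y'' s - y s * x'' s) (at s)"
    unfolding angular_part_def[abs_def] using assms
    by (auto intro!: derivative_eq_intros DERIV_x DERIV_y DERIV_x' DERIV_y')
  then show ?thesis
    by (simp add: acceleration_eq[OF assms] radial_part_def algebra_simps)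
qed

definition "frame1 s t =
  (vector [- x s * sin t / r s, x s * cos t / r s, - y s * sin t / r s, y s * cos t / r s] :: real^4)"
definition "frame2 s t = (vector [x' s * cos t, x' s * sin t, y' s * cos t, y' s * sin t] :: real^4)"

lemma pt_rot_surface:
  "pt (rot_surface x y) s t = vector [- x s * sin t, x s * cos t, - y s * sin t, y s * cos t]"
  by (rule pt_eqI[where h = "\<lambda>v. vector [x s * cos v, x s * sin v, y s * cos v, y s * sin v]"])
     (auto simp: rot_surface_def intro!: has_vector_derivative_vector4 derivative_eq_intros)

lemma ps_rot_surface: "s \<in> I \<Longrightarrow> ps (rot_surface x y) s t = frame2 s t"
  unfolding frame2_def
  by (rule ps_eqI[OF open_I, where h = "\<lambda>u. vector [x u * cos t, x u * sin t, y u * cos t, y u * sin t]"])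
     (auto simp: rot_surface_def intro!: has_vector_derivative_vector4 derivative_eq_intros DERIV_x DERIV_y)

text \<open>Statements about the first frame direction use \<open>Suc 0\<close>, the simp normal form of
  \<open>1 :: nat\<close> (\<open>One_nat_def\<close> is a simp rule), so that they apply after unfolding the sums
  over \<open>{1, 2}\<close> in the definitions.\<close>

lemma frameD_1: "frameD x y (Suc 0) F s t = (1 / r s) *\<^sub>R pt F s t"
  by (simp add: frameD_def r_def rho_def)

lemma frameD_2: "frameD x y 2 F = ps F"
  by (simp add: frameD_def fun_eq_iff)

lemma frameE_1: "frameE x y (Suc 0) s t = frame1 s t"
  by (simp add: frameE_def frameD_1 pt_rot_surface frame1_def vector4_arith)

lemma frameE_2: "s \<in> I \<Longrightarrow> frameE x y 2 s t = frame2 s t"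
  by (simp add: frameE_def frameD_2 ps_rot_surface)

lemma frameD_frameE_11:
  assumes "s \<in> I"
  shows "frameD x y (Suc 0) (frameE x y (Suc 0)) s t =
    vector [- x s * cos t / rho s, - x s * sin t / rho s, - y s * cos t / rho s, - y s * sin t / rho s]"
proof -
  have "pt (frameE x y (Suc 0)) s t =
      vector [- x s * cos t / r s, - x s * sin t / r s, - y s * cos t / r s, - y s * sin t / r s]"
    by (rule pt_eqI[where h = "\<lambda>v. frame1 s v"])
       (use r_pos[OF assms] in
         \<open>auto simp: frameE_1 frame1_def intro!: has_vector_derivative_vector4 derivative_eq_intros\<close>)
  then show ?thesis
    using r_mult_r[OF assms] by (simp add: frameD_1 vector4_arith)
qed

lemma frameD_frameE_12:
  assumes "s \<in> I"
  shows "frameD x y (Suc 0) (frameE x y 2) s t =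
    vector [- x' s * sin t / r s, x' s * cos t / r s, - y' s * sin t / r s, y' s * cos t / r s]"
proof -
  have "pt (frameE x y 2) s t = vector [- x' s * sin t, x' s * cos t, - y' s * sin t, y' s * cos t]"
    by (rule pt_eqI[where h = "\<lambda>v. frame2 s v"])
       (auto simp: frameE_2[OF assms] frame2_def intro!: has_vector_derivative_vector4 derivative_eq_intros)
  then show ?thesis by (simp add: frameD_1 vector4_arith)
qed

lemma DERIV_x_div_r:
  assumes "s \<in> I"
  shows "((\<lambda>u. x u / r u) has_real_derivative - y s * angular_part s / (rho s * r s)) (at s)"
proof -
  have "((\<lambda>u. x u / r u) has_real_derivative
      (x' s * r s - x s * (radial_part s / r s)) / (r s * r s)) (at s)"
    using assms r_pos[OF assms] by (auto intro!: derivative_eq_intros DERIV_x DERIV_r)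
  moreover have "(x' s * r s - x s * (radial_part s / r s)) / (r s * r s) =
      - y s * angular_part s / (rho s * r s)"
    using r_pos[OF assms] r_mult_r[OF assms, symmetric]
    by (simp add: divide_simps rho_def radial_part_def angular_part_def) algebra
  ultimately show ?thesis by simp
qed

lemma DERIV_y_div_r:
  assumes "s \<in> I"
  shows "((\<lambda>u. y u / r u) has_real_derivative x s * angular_part s / (rho s * r s)) (at s)"
proof -
  have "((\<lambda>u. y u / r u) has_real_derivative
      (y' s * r s - y s * (radial_part s / r s)) / (r s * r s)) (at s)"
    using assms r_pos[OF assms] by (auto intro!: derivative_eq_intros DERIV_y DERIV_r)
  moreover have "(y' s * r s - y s * (radial_part s / r s)) / (r s * r s) =
      x s * angular_part s / (rho s * r s)"
    using r_pos[OF assms] r_mult_r[OF assms, symmetric]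
    by (simp add: divide_simps rho_def radial_part_def angular_part_def) algebra
  ultimately show ?thesis by simp
qed

lemma frameD_frameE_21:
  assumes "s \<in> I"
  shows "frameD x y 2 (frameE x y (Suc 0)) s t =
    (angular_part s / (rho s * r s)) *\<^sub>R vector [y s * sin t, - y s * cos t, - x s * sin t, x s * cos t]"
proof -
  define dx where "dx = - y s * angular_part s / (rho s * r s)"
  define dy where "dy = x s * angular_part s / (rho s * r s)"
  have deriv: "((\<lambda>u. vector [- (x u / r u) * sin t, x u / r u * cos t, - (y u / r u) * sin t, y u / r u * cos t] :: real^4)
      has_vector_derivative vector [- dx * sin t, dx * cos t, - dy * sin t, dy * cos t]) (at s)"
    by (intro has_vector_derivative_vector4 DERIV_cmult_right DERIV_minus
        DERIV_x_div_r[OF assms, folded dx_def] DERIV_y_div_r[OF assms, folded dy_def])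
  have "ps (frameE x y (Suc 0)) s t = vector [- dx * sin t, dx * cos t, - dy * sin t, dy * cos t]"
    by (rule ps_eqI[OF open_I assms _ deriv]) (simp add: frameE_1 frame1_def)
  then show ?thesis by (simp add: frameD_2 vector4_arith dx_def dy_def ac_simps)
qed

lemma frameD_frameE_22:
  assumes "s \<in> I"
  shows "frameD x y 2 (frameE x y 2) s t =
    vector [x'' s * cos t, x'' s * sin t, y'' s * cos t, y'' s * sin t]"
  unfolding frameD_2
  by (rule ps_eqI[OF open_I assms, where h = "\<lambda>u. frame2 u t"])
     (auto simp: frameE_2 frame2_def intro!: has_vector_derivative_vector4 derivative_eq_intros
       DERIV_x' DERIV_y' assms)

lemma inner_frameD_frameE_11:
  assumes "s \<in> I"
  shows "frameD x y (Suc 0) (frameE x y (Suc 0)) s t \<bullet> frame1 s t = 0"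
    and "frameD x y (Suc 0) (frameE x y (Suc 0)) s t \<bullet> frame2 s t = - radial_part s / rho s"
  using rho_pos[OF assms] r_pos[OF assms]
  by (simp_all add: frameD_frameE_11 assms frame1_def frame2_def vector4_arith radial_part_def
      field_simps) (use sin_cos_squared_add[of t] in algebra)

lemma inner_frameD_frameE_12:
  assumes "s \<in> I"
  shows "frameD x y (Suc 0) (frameE x y 2) s t \<bullet> frame1 s t = radial_part s / rho s"
    and "frameD x y (Suc 0) (frameE x y 2) s t \<bullet> frame2 s t = 0"
  using rho_pos[OF assms] r_pos[OF assms] r_mult_r[OF assms, symmetric]
  by (simp_all add: frameD_frameE_12 assms frame1_def frame2_def vector4_arith radial_part_def
      field_simps) (use sin_cos_squared_add[of t] in \<open>simp add: rho_def; algebra\<close>)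

lemma inner_frameD_frameE_21:
  assumes "s \<in> I"
  shows "frameD x y 2 (frameE x y (Suc 0)) s t \<bullet> frame1 s t = 0"
    and "frameD x y 2 (frameE x y (Suc 0)) s t \<bullet> frame2 s t = 0"
  by (simp_all add: frameD_frameE_21 assms frame1_def frame2_def vector4_arith algebra_simps)

lemma inner_frameD_frameE_22:
  assumes "s \<in> I"
  shows "frameD x y 2 (frameE x y 2) s t \<bullet> frame1 s t = 0"
    and "frameD x y 2 (frameE x y 2) s t \<bullet> frame2 s t = 0"
  by (simp_all add: frameD_frameE_22 assms frame1_def frame2_def vector4_arith field_simps)
     (use velocity_orthogonal_acceleration[OF assms] sin_cos_squared_add[of t] in algebra)

lemma sff_11:
  assumes "s \<in> I"
  shows "sff x y (Suc 0) (Suc 0) s t =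
    (angular_part s / rho s) *\<^sub>R vector [- y' s * cos t, - y' s * sin t, x' s * cos t, x' s * sin t]"
proof -
  have h: "radial_part s * x' s - x s = - y' s * angular_part s"
    "radial_part s * y' s - y s = x' s * angular_part s"
    using unit_speed[OF assms] unfolding radial_part_def angular_part_def by algebra+
  show ?thesis
    using rho_pos[OF assms]
    by (simp add: sff_def frameE_1 frameE_2 assms inner_frameD_frameE_11)
       (simp add: frameD_frameE_11 assms frame2_def vector4_arith vector4_eq_iff field_simps,
        use h in algebra)
qed

lemma sff_12:
  assumes "s \<in> I"
  shows "sff x y (Suc 0) 2 s t =
    (angular_part s / (rho s * r s)) *\<^sub>R vector [y s * sin t, - y s * cos t, - x s * sin t, x s * cos t]"
proof -
  have h: "x' s * rho s - x s * radial_part s = - y s * angular_part s"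
    "y' s * rho s - y s * radial_part s = x s * angular_part s"
    unfolding rho_def radial_part_def angular_part_def by algebra+
  show ?thesis
    using rho_pos[OF assms] r_pos[OF assms]
    by (simp add: sff_def frameE_1 frameE_2 assms inner_frameD_frameE_12)
       (simp add: frameD_frameE_12 assms frame1_def vector4_arith vector4_eq_iff field_simps,
        use h in algebra)
qed

lemma sff_21:
  assumes "s \<in> I"
  shows "sff x y 2 (Suc 0) s t =
    (angular_part s / (rho s * r s)) *\<^sub>R vector [y s * sin t, - y s * cos t, - x s * sin t, x s * cos t]"
  by (simp add: sff_def frameE_1 frameE_2 assms inner_frameD_frameE_21)
     (simp add: frameD_frameE_21 assms)

lemma sff_22:
  assumes "s \<in> I"
  shows "sff x y 2 2 s t = vector [x'' s * cos t, x'' s * sin t, y'' s * cos t, y'' s * sin t]"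
  by (simp add: sff_def frameE_1 frameE_2 assms inner_frameD_frameE_22)
     (simp add: frameD_frameE_22 assms)

lemma gauss_curvature_eq:
  assumes "s \<in> I"
  shows "gauss_curvature x y s t = angular_part s / rho s * (curvature s - angular_part s / rho s)"
proof -
  have "vector [- y' s * cos t, - y' s * sin t, x' s * cos t, x' s * sin t] \<bullet>
      (vector [x'' s * cos t, x'' s * sin t, y'' s * cos t, y'' s * sin t] :: real^4) = curvature s"
    by (simp add: vector4_arith curvature_def) (use sin_cos_squared_add[of t] in algebra)
  moreover have "vector [y s * sin t, - y s * cos t, - x s * sin t, x s * cos t] \<bullet>
      (vector [y s * sin t, - y s * cos t, - x s * sin t, x s * cos t] :: real^4) = rho s"
    by (simp add: vector4_arith rho_def) (use sin_cos_squared_add[of t] in algebra)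
  moreover have "angular_part s / (rho s * r s) * (angular_part s / (rho s * r s) * rho s) =
      angular_part s / rho s * (angular_part s / rho s)"
    using rho_pos[OF assms] r_mult_r[OF assms, symmetric] by (simp add: field_simps)
  ultimately show ?thesis
    by (simp add: gauss_curvature_def sff_11 sff_12 sff_22 assms algebra_simps)
qed

end

locale flat_profile_curve = profile_curve +
  assumes flat: "\<forall>s\<in>I. \<forall>t. gauss_curvature x y s t = 0"
begin

lemma flat_eq: assumes "s \<in> I" shows "angular_part s * (curvature s * rho s - angular_part s) = 0"
proof -
  have "angular_part s / rho s * (curvature s - angular_part s / rho s) = 0"
    using flat gauss_curvature_eq[OF assms] assms by auto
  then show ?thesis
    using rho_pos[OF assms] by (simp add: field_simps)
qed

lemma radial_rate_exists: "\<exists>a. \<forall>s\<in>I. radial_part s / r s = a"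
proof (rule has_real_derivative_zero_imp_const_on_interval[OF interval_I open_I])
  fix s assume s: "s \<in> I"
  have "((\<lambda>s. radial_part s / r s) has_real_derivative
      ((1 - curvature s * angular_part s) * r s - radial_part s * (radial_part s / r s)) / (r s * r s))
      (at s)"
    using s r_pos[OF s] by (auto intro!: derivative_eq_intros DERIV_radial_part DERIV_r)
  moreover have "(1 - curvature s * angular_part s) * r s * r s - radial_part s * radial_part s = 0"
    using flat_eq[OF s] rho_eq_radial_angular[OF s] r_mult_r[OF s] by algebra
  then have "(1 - curvature s * angular_part s) * r s - radial_part s * (radial_part s / r s) = 0"
    using r_pos[OF s] by (simp add: field_simps)
  ultimately show "((\<lambda>s. radial_part s / r s) has_real_derivative 0) (at s)" by simp
qed

text \<open>In polar coordinates \<open>radial_rate = r'\<close> and \<open>angular_rate = r \<theta>'\<close>.\<close>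
definition "radial_rate = (SOME a. \<forall>s\<in>I. radial_part s / r s = a)"

lemma radial_part_eq: assumes "s \<in> I" shows "radial_part s = radial_rate * r s"
proof -
  have "radial_part s / r s = radial_rate"
    using someI_ex[OF radial_rate_exists] assms unfolding radial_rate_def by blast
  then show ?thesis using r_pos[OF assms] by (simp add: field_simps)
qed

lemma angular_part_sq: "s \<in> I \<Longrightarrow> (angular_part s)\<^sup>2 = rho s * (1 - radial_rate\<^sup>2)"
  using rho_eq_radial_angular[of s] radial_part_eq[of s] r_mult_r[of s] by algebra

lemma curvature_mult_rho: assumes s: "s \<in> I" shows "curvature s * rho s = angular_part s"
  \<comment> \<open>by \<open>angular_part_sq\<close>, the angular part vanishes either everywhere or nowhere\<close>
proof (cases "radial_rate\<^sup>2 = 1")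
  case True
  then have W0: "\<And>u. u \<in> I \<Longrightarrow> angular_part u = 0"
    using angular_part_sq by simp
  from has_real_derivative_zero_if_locally_const[OF open_I s W0 DERIV_angular_part[OF s]]
  have "curvature s * radial_part s = 0" .
  moreover have "radial_part s \<noteq> 0"
    using radial_part_eq[OF s] r_pos[OF s] True by auto
  ultimately show ?thesis using W0[OF s] by simp
next
  case False
  then have "angular_part s \<noteq> 0"
    using angular_part_sq[OF s] rho_pos[OF s] by auto
  then show ?thesis using flat_eq[OF s] by simp
qed

lemma angular_rate_exists: "\<exists>b. \<forall>s\<in>I. angular_part s / r s = b"
proof (rule has_real_derivative_zero_imp_const_on_interval[OF interval_I open_I])
  fix s assume s: "s \<in> I"
  have "((\<lambda>s. angular_part s / r s) has_real_derivative
      (curvature s * radial_part s * r s - angular_part s * (radial_part s / r s)) / (r s * r s)) (at s)"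
    using s r_pos[OF s] by (auto intro!: derivative_eq_intros DERIV_angular_part DERIV_r)
  moreover have "curvature s * radial_part s * r s * r s - angular_part s * radial_part s = 0"
    by (simp add: curvature_mult_rho[OF s, symmetric] r_mult_r[OF s, symmetric] algebra_simps)
  then have "curvature s * radial_part s * r s - angular_part s * (radial_part s / r s) = 0"
    using r_pos[OF s] by (simp add: field_simps)
  ultimately show "((\<lambda>s. angular_part s / r s) has_real_derivative 0) (at s)" by simp
qed

definition "angular_rate = (SOME b. \<forall>s\<in>I. angular_part s / r s = b)"

lemma angular_part_eq: assumes "s \<in> I" shows "angular_part s = angular_rate * r s"
proof -
  have "angular_part s / r s = angular_rate"
    using someI_ex[OF angular_rate_exists] assms unfolding angular_rate_def by blast
  then show ?thesis using r_pos[OF assms] by (simp add: field_simps)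
qed

lemma radial_rate_sq_plus_angular_rate_sq: "radial_rate\<^sup>2 + angular_rate\<^sup>2 = 1"
proof -
  obtain s where s: "s \<in> I" using nonempty_I by auto
  have "r s * r s * (radial_rate\<^sup>2 + angular_rate\<^sup>2) = r s * r s"
    using angular_part_sq[OF s] angular_part_eq[OF s] r_mult_r[OF s] by algebra
  then show ?thesis using r_pos[OF s] by simp
qed

lemma curvature_eq: assumes "s \<in> I" shows "curvature s = angular_rate / r s"
proof -
  have "curvature s * (r s * r s) = angular_rate * r s"
    using curvature_mult_rho[OF assms] angular_part_eq[OF assms] r_mult_r[OF assms] by simp
  then show ?thesis using r_pos[OF assms] by (simp add: field_simps)
qed

lemma DERIV_curvature:
  assumes "s \<in> I"
  shows "(curvature has_real_derivative - curvature s * radial_rate / r s) (at s)"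
proof -
  have "((\<lambda>u. angular_rate / r u) has_real_derivative
      - (angular_rate * (radial_part s / r s) / (r s * r s))) (at s)"
    using assms r_pos[OF assms] by (auto intro!: derivative_eq_intros DERIV_r)
  moreover have "- (angular_rate * (radial_part s / r s) / (r s * r s)) = - curvature s * radial_rate / r s"
    using r_pos[OF assms] by (simp add: curvature_eq[OF assms] radial_part_eq[OF assms] field_simps)
  ultimately have "((\<lambda>u. angular_rate / r u) has_real_derivative - curvature s * radial_rate / r s) (at s)"
    by simp
  then show ?thesis
    by (rule has_field_derivative_transform_within_open[OF _ open_I assms]) (simp add: curvature_eq)
qed

text \<open>Real and imaginary parts of \<open>z z' / |z|\<close> for \<open>z = x + i y\<close>.\<close>
definition "re_zdz s = (x s * x' s - y s * y' s) / r s"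
definition "im_zdz s = (x s * y' s + y s * x' s) / r s"

lemma re_zdz_sq_plus_im_zdz_sq: assumes "s \<in> I" shows "(re_zdz s)\<^sup>2 + (im_zdz s)\<^sup>2 = 1"
proof -
  have "(x s * x' s - y s * y' s)\<^sup>2 + (x s * y' s + y s * x' s)\<^sup>2 = (r s)\<^sup>2"
    using unit_speed[OF assms] r_mult_r[OF assms] unfolding rho_def power2_eq_square by algebra
  then show ?thesis
    using r_pos[OF assms] by (simp add: re_zdz_def im_zdz_def power_divide add_divide_distrib[symmetric])
qed

lemma DERIV_re_zdz:
  assumes "s \<in> I"
  shows "(re_zdz has_real_derivative - 2 * curvature s * im_zdz s) (at s)"
proof -
  let ?N = "x' s * x' s + x s * x'' s - (y' s * y' s + y s * y'' s)"
  let ?u = "x s * x' s - y s * y' s"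
  have "(re_zdz has_real_derivative (?N * r s - ?u * (radial_part s / r s)) / (r s * r s)) (at s)"
    unfolding re_zdz_def[abs_def] using assms r_pos[OF assms]
    by (auto intro!: derivative_eq_intros DERIV_x DERIV_y DERIV_x' DERIV_y' DERIV_r)
  moreover have "?N * (r s * r s) - ?u * radial_part s = - 2 * curvature s * (x s * y' s + y s * x' s) * rho s"
    using acceleration_eq[OF assms] curvature_mult_rho[OF assms] r_mult_r[OF assms]
    unfolding rho_def radial_part_def angular_part_def by algebra
  then have "(?N * r s - ?u * (radial_part s / r s)) / (r s * r s) = - 2 * curvature s * im_zdz s"
    using r_pos[OF assms] rho_pos[OF assms] r_mult_r[OF assms]
    by (simp add: im_zdz_def divide_simps) (simp add: algebra_simps)
  ultimately show ?thesis by simp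
qed

lemma DERIV_im_zdz:
  assumes "s \<in> I"
  shows "(im_zdz has_real_derivative 2 * curvature s * re_zdz s) (at s)"
proof -
  let ?N = "x' s * y' s + x s * y'' s + (y' s * x' s + y s * x'' s)"
  let ?v = "x s * y' s + y s * x' s"
  have "(im_zdz has_real_derivative (?N * r s - ?v * (radial_part s / r s)) / (r s * r s)) (at s)"
    unfolding im_zdz_def[abs_def] using assms r_pos[OF assms]
    by (auto intro!: derivative_eq_intros DERIV_x DERIV_y DERIV_x' DERIV_y' DERIV_r)
  moreover have "?N * (r s * r s) - ?v * radial_part s = 2 * curvature s * (x s * x' s - y s * y' s) * rho s"
    using acceleration_eq[OF assms] curvature_mult_rho[OF assms] r_mult_r[OF assms]
    unfolding rho_def radial_part_def angular_part_def by algebra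
  then have "(?N * r s - ?v * (radial_part s / r s)) / (r s * r s) = 2 * curvature s * re_zdz s"
    using r_pos[OF assms] rho_pos[OF assms] r_mult_r[OF assms]
    by (simp add: re_zdz_def divide_simps) (simp add: algebra_simps)
  ultimately show ?thesis by simp
qed

lemma gauss_map_eq:
  assumes "s \<in> I"
  shows "gauss_map x y s t = vector
    [- (radial_rate + re_zdz s) / 2, - angular_rate * sin (2 * t) / 2,
     (angular_rate * cos (2 * t) - im_zdz s) / 2, (im_zdz s + angular_rate * cos (2 * t)) / 2,
     angular_rate * sin (2 * t) / 2, (re_zdz s - radial_rate) / 2]"
proof -
  have "radial_rate = radial_part s / r s" "angular_rate = angular_part s / r s"
    using radial_part_eq[OF assms] angular_part_eq[OF assms] r_pos[OF assms] by simp_all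
  then show ?thesis
    using r_pos[OF assms]
    by (simp add: gauss_map_def frameE_1 frameE_2[OF assms] frame1_def frame2_def wedge4_def
        sin_double cos_double)
       (simp add: vector6_eq_iff re_zdz_def im_zdz_def radial_part_def angular_part_def field_simps,
        use sin_cos_squared_add[of t] in algebra)
qed

lemma pt_gauss_map:
  assumes "s \<in> I"
  shows "pt (gauss_map x y) s t = vector
    [0, - angular_rate * cos (2 * t), - angular_rate * sin (2 * t), - angular_rate * sin (2 * t),
     angular_rate * cos (2 * t), 0]"
  by (rule pt_eqI, rule gauss_map_eq[OF assms])
     (auto intro!: has_vector_derivative_vector6 derivative_eq_intros)

lemma pt_frameD_gauss_map:
  assumes "s \<in> I"
  shows "pt (frameD x y (Suc 0) (gauss_map x y)) s t = (1 / r s) *\<^sub>R vector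
    [0, 2 * angular_rate * sin (2 * t), - 2 * angular_rate * cos (2 * t),
     - 2 * angular_rate * cos (2 * t), - 2 * angular_rate * sin (2 * t), 0]"
proof (rule pt_eqI)
  show "frameD x y (Suc 0) (gauss_map x y) s v = (1 / r s) *\<^sub>R vector
    [0, - angular_rate * cos (2 * v), - angular_rate * sin (2 * v), - angular_rate * sin (2 * v),
     angular_rate * cos (2 * v), 0]" for v
    by (simp add: frameD_1 pt_gauss_map[OF assms])
  show "((\<lambda>v. (1 / r s) *\<^sub>R vector
    [0, - angular_rate * cos (2 * v), - angular_rate * sin (2 * v), - angular_rate * sin (2 * v),
     angular_rate * cos (2 * v), 0] :: real^6) has_vector_derivative (1 / r s) *\<^sub>R vector
    [0, 2 * angular_rate * sin (2 * t), - 2 * angular_rate * cos (2 * t),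
     - 2 * angular_rate * cos (2 * t), - 2 * angular_rate * sin (2 * t), 0]) (at t)"
    by (intro bounded_linear.has_vector_derivative[OF bounded_linear_scaleR_right]
        has_vector_derivative_vector6) (auto intro!: derivative_eq_intros)
qed

lemma ps_gauss_map:
  assumes "s \<in> I"
  shows "ps (gauss_map x y) s t = vector
    [curvature s * im_zdz s, 0, - curvature s * re_zdz s, curvature s * re_zdz s, 0,
     - curvature s * im_zdz s]"
  by (rule ps_eqI[OF open_I assms], rule gauss_map_eq)
     (auto intro!: has_vector_derivative_vector6 derivative_eq_intros DERIV_re_zdz DERIV_im_zdz assms)

lemma ps_ps_gauss_map:
  assumes "s \<in> I"
  shows "ps (ps (gauss_map x y)) s t = vector
    [2 * (curvature s)\<^sup>2 * re_zdz s - curvature s * radial_rate * im_zdz s / r s, 0,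
     2 * (curvature s)\<^sup>2 * im_zdz s + curvature s * radial_rate * re_zdz s / r s,
     - 2 * (curvature s)\<^sup>2 * im_zdz s - curvature s * radial_rate * re_zdz s / r s, 0,
     curvature s * radial_rate * im_zdz s / r s - 2 * (curvature s)\<^sup>2 * re_zdz s]"
  by (rule ps_eqI[OF open_I assms], rule ps_gauss_map)
     (auto intro!: has_vector_derivative_vector6 derivative_eq_intros DERIV_re_zdz DERIV_im_zdz
       DERIV_curvature assms simp: power2_eq_square algebra_simps)

lemma laplacian_gauss_map:
  assumes "s \<in> I"
  shows "laplacian x y (gauss_map x y) s t = vector
    [- 2 * (curvature s)\<^sup>2 * re_zdz s, - 2 * angular_rate * sin (2 * t) / rho s,
     2 * angular_rate * cos (2 * t) / rho s - 2 * (curvature s)\<^sup>2 * im_zdz s,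
     2 * angular_rate * cos (2 * t) / rho s + 2 * (curvature s)\<^sup>2 * im_zdz s,
     2 * angular_rate * sin (2 * t) / rho s, 2 * (curvature s)\<^sup>2 * re_zdz s]"
proof -
  have "laplacian x y (gauss_map x y) s t =
      - ((1 / r s) *\<^sub>R pt (frameD x y (Suc 0) (gauss_map x y)) s t
         + (radial_part s / rho s) *\<^sub>R ps (gauss_map x y) s t + ps (ps (gauss_map x y)) s t)"
    by (simp add: laplacian_def frameE_1 frameE_2 assms inner_frameD_frameE_11 inner_frameD_frameE_22)
       (simp add: frameD_1 frameD_2)
  also have "\<dots> = vector
    [- 2 * (curvature s)\<^sup>2 * re_zdz s, - 2 * angular_rate * sin (2 * t) / rho s,
     2 * angular_rate * cos (2 * t) / rho s - 2 * (curvature s)\<^sup>2 * im_zdz s,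
     2 * angular_rate * cos (2 * t) / rho s + 2 * (curvature s)\<^sup>2 * im_zdz s,
     2 * angular_rate * sin (2 * t) / rho s, 2 * (curvature s)\<^sup>2 * re_zdz s]"
    using r_pos[OF assms] radial_part_eq[OF assms] r_mult_r[OF assms, symmetric]
    by (simp add: pt_frameD_gauss_map ps_gauss_map ps_ps_gauss_map assms vector6_arith vector6_eq_iff
        field_simps power2_eq_square)
  finally show ?thesis .
qed

lemma curvature_sq_mult_rho:
  assumes "s \<in> I" shows "(curvature s)\<^sup>2 * rho s = 1 - radial_rate\<^sup>2"
proof -
  have "(curvature s)\<^sup>2 * rho s = (curvature s * r s)\<^sup>2"
    by (simp add: power2_eq_square r_mult_r[OF assms, symmetric] ac_simps)
  also have "\<dots> = angular_rate\<^sup>2"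
    using curvature_eq[OF assms] r_pos[OF assms] by simp
  finally show ?thesis
    using radial_rate_sq_plus_angular_rate_sq by simp
qed

lemma re_zdz_eq_if_1type:
  assumes a: "radial_rate \<noteq> 0" and b: "angular_rate \<noteq> 0" and s: "s \<in> I"
    and eq: "\<forall>s\<in>I. \<forall>t. laplacian x y (gauss_map x y) s t = f s t *\<^sub>R (gauss_map x y s t + C)"
  shows "re_zdz s = (2 * C $ 1 - radial_rate) / radial_rate\<^sup>2"
proof -
  have at: "(laplacian x y (gauss_map x y) s t) $ k = f s t * (gauss_map x y s t $ k + C $ k)" for t k
    using eq s by simp
  have "2 * angular_rate / rho s - 2 * (curvature s)\<^sup>2 * im_zdz s =
      f s 0 * ((angular_rate - im_zdz s) / 2 + C $ 3)"
    "2 * angular_rate / rho s + 2 * (curvature s)\<^sup>2 * im_zdz s =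
      f s 0 * ((im_zdz s + angular_rate) / 2 + C $ 4)"
    using at[of 0 3] at[of 0 4] unfolding laplacian_gauss_map[OF s] gauss_map_eq[OF s] by simp_all
  then have "4 * angular_rate / rho s = f s 0 * (angular_rate + C $ 3 + C $ 4)"
    by algebra
  then have "f s 0 \<noteq> 0"
    using b rho_pos[OF s] by auto
  moreover have "0 = f s 0 * C $ 2"
    using at[of 0 2] unfolding laplacian_gauss_map[OF s] gauss_map_eq[OF s] by simp
  ultimately have C2: "C $ 2 = 0" by simp
  have "- 2 * angular_rate / rho s = f s (pi / 4) * (- angular_rate / 2 + C $ 2)"
    using at[of "pi / 4" 2] unfolding laplacian_gauss_map[OF s] gauss_map_eq[OF s] by simp
  then have f: "f s (pi / 4) = 4 / rho s"
    using C2 b rho_pos[OF s] by (simp add: field_simps)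
  have "- 2 * (curvature s)\<^sup>2 * re_zdz s = 4 / rho s * (- (radial_rate + re_zdz s) / 2 + C $ 1)"
    using at[of "pi / 4" 1] unfolding laplacian_gauss_map[OF s] gauss_map_eq[OF s] f by simp
  then have "- 2 * ((curvature s)\<^sup>2 * rho s) * re_zdz s = 4 * (- (radial_rate + re_zdz s) / 2 + C $ 1)"
    using rho_pos[OF s] by (simp add: field_simps)
  then have "radial_rate\<^sup>2 * re_zdz s = 2 * C $ 1 - radial_rate"
    unfolding curvature_sq_mult_rho[OF s] by algebra
  then show ?thesis using a by (simp add: field_simps)
qed

lemma rates_vanish_if_pointwise_1type:
  assumes "pointwise_1type x y I"
  shows "radial_rate = 0 \<or> angular_rate = 0"
proof (rule ccontr)
  assume "\<not> (radial_rate = 0 \<or> angular_rate = 0)"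
  then have a: "radial_rate \<noteq> 0" and b: "angular_rate \<noteq> 0" by auto
  obtain f C where eq: "\<forall>s\<in>I. \<forall>t. laplacian x y (gauss_map x y) s t = f s t *\<^sub>R (gauss_map x y s t + C)"
    using assms unfolding pointwise_1type_def by blast
  obtain s0 where s0: "s0 \<in> I" using nonempty_I by auto
  have curvature_nz: "curvature s \<noteq> 0" if "s \<in> I" for s
    using curvature_eq[OF that] r_pos[OF that] b by simp
  have im0: "im_zdz s = 0" if s: "s \<in> I" for s
  proof -
    have "- 2 * curvature s * im_zdz s = 0"
      using has_real_derivative_zero_if_locally_const[OF open_I s _ DERIV_re_zdz[OF s]]
        re_zdz_eq_if_1type[OF a b _ eq] by blast
    then show ?thesis using curvature_nz[OF s] by simp
  qed
  have "2 * curvature s0 * re_zdz s0 = 0"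
    using has_real_derivative_zero_if_locally_const[OF open_I s0 im0 DERIV_im_zdz[OF s0]] .
  then have "re_zdz s0 = 0" using curvature_nz[OF s0] by simp
  then show False using re_zdz_sq_plus_im_zdz_sq[OF s0] im0[OF s0] by simp
qed

lemma pointwise_1type_if_angular_rate_zero:
  assumes "angular_rate = 0" shows "pointwise_1type x y I"
  unfolding pointwise_1type_def
proof (intro exI conjI)
  show "smooth_on2 (I \<times> UNIV) (\<lambda>s t. 0)" by (rule smooth_on2_const)
  show "\<forall>s\<in>I. \<forall>t. laplacian x y (gauss_map x y) s t = 0 *\<^sub>R (gauss_map x y s t + 0)"
    using assms by (simp add: laplacian_gauss_map curvature_eq vector6_arith)
qed

lemma r_const_if_radial_rate_zero:
  assumes "radial_rate = 0" shows "\<exists>r0. \<forall>s\<in>I. r s = r0"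
  using has_real_derivative_zero_imp_const_on_interval[OF interval_I open_I] DERIV_r
    radial_part_eq assms by simp

lemma pointwise_1type_if_radial_rate_zero:
  assumes a0: "radial_rate = 0" shows "pointwise_1type x y I"
proof -
  obtain r0 where r0: "\<And>s. s \<in> I \<Longrightarrow> r s = r0"
    using r_const_if_radial_rate_zero[OF a0] by auto
  have "laplacian x y (gauss_map x y) s t = (4 / r0\<^sup>2) *\<^sub>R (gauss_map x y s t + 0)" if s: "s \<in> I" for s t
  proof -
    have rho: "rho s = r0\<^sup>2"
      using r_mult_r[OF s] r0[OF s] by (simp add: power2_eq_square)
    moreover have "(curvature s)\<^sup>2 = 1 / r0\<^sup>2"
      using curvature_sq_mult_rho[OF s] r0[OF s] r_pos[OF s] a0 unfolding rho
      by (simp add: field_simps)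
    ultimately show ?thesis
      using r_pos[OF s] r0[OF s]
      by (simp add: laplacian_gauss_map[OF s] gauss_map_eq[OF s] a0 vector6_arith vector6_eq_iff
          field_simps)
  qed
  then show ?thesis
    unfolding pointwise_1type_def using smooth_on2_const by blast
qed

lemma pointwise_1type_iff: "pointwise_1type x y I \<longleftrightarrow> radial_rate = 0 \<or> angular_rate = 0"
  using rates_vanish_if_pointwise_1type pointwise_1type_if_radial_rate_zero
    pointwise_1type_if_angular_rate_zero by blast

lemma totally_geodesic_iff: "totally_geodesic x y I \<longleftrightarrow> angular_rate = 0"
proof
  assume tg: "totally_geodesic x y I"
  obtain s where s: "s \<in> I" using nonempty_I by auto
  have "sff x y (Suc 0) 2 s 0 = 0"
    using tg s unfolding totally_geodesic_def by auto
  then have "angular_part s * y s = 0" "angular_part s * x s = 0"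
    using rho_pos[OF s] r_pos[OF s] by (simp_all add: sff_12[OF s] vector4_arith vector4_eq_iff)
  then have "angular_part s = 0"
    using rho_pos[OF s] unfolding rho_def by (metis mult_eq_0_iff power2_eq_square add_0 less_irrefl)
  then show "angular_rate = 0"
    using angular_part_eq[OF s] r_pos[OF s] by simp
next
  assume b0: "angular_rate = 0"
  have "sff x y i j s t = 0" if "s \<in> I" "i \<in> {1, 2}" "j \<in> {1, 2}" for s t i j
    using that b0 angular_part_eq[OF \<open>s \<in> I\<close>] acceleration_eq[OF \<open>s \<in> I\<close>] curvature_eq[OF \<open>s \<in> I\<close>]
    by (auto simp: sff_11 sff_12 sff_21 sff_22 vector4_arith)
  then show "totally_geodesic x y I"
    unfolding totally_geodesic_def by blast
qed

lemma radial_rate_zero_if_circle: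
  assumes "\<forall>s\<in>I. x s = lam * cos (b0 * s + d) \<and> y s = lam * sin (b0 * s + d)"
  shows "radial_rate = 0"
proof -
  obtain s where s: "s \<in> I" using nonempty_I by auto
  have "((\<lambda>u. lam * cos (b0 * u + d)) has_real_derivative - lam * b0 * sin (b0 * s + d)) (at s)"
    "((\<lambda>u. lam * sin (b0 * u + d)) has_real_derivative lam * b0 * cos (b0 * s + d)) (at s)"
    by (auto intro!: derivative_eq_intros)
  then have "(x has_real_derivative - lam * b0 * sin (b0 * s + d)) (at s)"
    "(y has_real_derivative lam * b0 * cos (b0 * s + d)) (at s)"
    using assms by (auto intro: has_field_derivative_transform_within_open[OF _ open_I s])
  then have "x' s = - lam * b0 * sin (b0 * s + d)" "y' s = lam * b0 * cos (b0 * s + d)"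
    using DERIV_x[OF s] DERIV_y[OF s] DERIV_unique by blast+
  then have "radial_part s = 0"
    using assms s by (simp add: radial_part_def algebra_simps)
  then show ?thesis
    using radial_part_eq[OF s] r_pos[OF s] by simp
qed

lemma circle_if_radial_rate_zero:
  assumes a0: "radial_rate = 0"
  shows "\<exists>b0 lam d. b0\<^sup>2 * lam\<^sup>2 = 1 \<and> (\<forall>s\<in>I. x s = lam * cos (b0 * s + d) \<and> y s = lam * sin (b0 * s + d))"
proof -
  obtain r0 where r0: "\<And>s. s \<in> I \<Longrightarrow> r s = r0"
    using r_const_if_radial_rate_zero[OF a0] by auto
  obtain s0 where s0: "s0 \<in> I" using nonempty_I by auto
  have r0_pos: "r0 > 0" using r_pos[OF s0] r0[OF s0] by simp
  define w where "w = angular_rate / r0"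
  have "x' s = - w * y s \<and> y' s = w * x s" if s: "s \<in> I" for s
  proof -
    have "x' s * rho s = x s * radial_part s - y s * angular_part s"
      "y' s * rho s = y s * radial_part s + x s * angular_part s"
      unfolding rho_def radial_part_def angular_part_def by algebra+
    moreover have "rho s = r0 * r0" "radial_part s = 0" "angular_part s = angular_rate * r0"
      using r_mult_r[OF s] radial_part_eq[OF s] angular_part_eq[OF s] r0[OF s] a0 by auto
    ultimately have "r0 * (r0 * x' s + y s * angular_rate) = 0"
      "r0 * (r0 * y' s - x s * angular_rate) = 0"
      by (simp_all add: algebra_simps)
    then have "r0 * x' s + y s * angular_rate = 0" "r0 * y' s - x s * angular_rate = 0"
      using r0_pos by simp_all
    then show ?thesis
      using r0_pos by (simp add: w_def field_simps)
  qed
  then obtain d where "\<forall>s\<in>I. x s = r0 * cos (w * s + d) \<and> y s = r0 * sin (w * s + d)"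
    using rotation_ode_solution[OF interval_I open_I s0 r0_pos, of x y w] DERIV_x DERIV_y
      r_mult_r[OF s0] r0[OF s0] by (auto simp: rho_def power2_eq_square)
  moreover have "w\<^sup>2 * r0\<^sup>2 = 1"
    using radial_rate_sq_plus_angular_rate_sq a0 r0_pos by (simp add: w_def power_divide)
  ultimately show ?thesis by blast
qed

lemma circle_iff:
  "(\<exists>b0 lam d. b0\<^sup>2 * lam\<^sup>2 = 1 \<and>
      (\<forall>s\<in>I. x s = lam * cos (b0 * s + d) \<and> y s = lam * sin (b0 * s + d)))
   \<longleftrightarrow> radial_rate = 0"
  using radial_rate_zero_if_circle circle_if_radial_rate_zero by blast

end

theorem theorem1:
  fixes x y :: "real \<Rightarrow> real" and I :: "real set"
  assumes "open I" and "is_interval I" and "I \<noteq> {}"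
    and "smooth_on1 I x" and "smooth_on1 I y"
    and "\<forall>s\<in>I. (deriv x s)\<^sup>2 + (deriv y s)\<^sup>2 = 1"
    and "\<forall>s\<in>I. (x s)\<^sup>2 + (y s)\<^sup>2 > 0"
    and "\<forall>s\<in>I. \<forall>t. gauss_curvature x y s t = 0"
  shows "pointwise_1type x y I \<longleftrightarrow>
           totally_geodesic x y I \<or>
           (\<exists>b0 lam d. b0\<^sup>2 * lam\<^sup>2 = 1 \<and>
              (\<forall>s\<in>I. x s = lam * cos (b0 * s + d) \<and> y s = lam * sin (b0 * s + d)))"
proof -
  interpret flat_profile_curve x y I
    using assms by unfold_locales auto
  show ?thesis
    unfolding pointwise_1type_iff totally_geodesic_iff circle_iff by blast
qed

end
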